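(* Let $M\in\mathbb{T}^{n\times n}$ and $q\in\mathbb{T}^n$ be such that no column of $M$ is the all-$(-\infty)$ vector and no entry of $q$ equals $-\infty$, and let $G=(V,E)$ be the associated colored bipartite multigraph. If $F\subset E$ covers all row nodes of $G$, then the point $(w,z)=\alpha(F)$ satisfies $w\oplus M\odot z=q$.
   Context: $\mathbb{T}=\mathbb{R}\cup\{-\infty\}$, $\oplus=\max$, $\odot=+$, $(M\odot z)_i=\max_j(M_{ij}+z_j)$; convention $a-(-\infty)=+\infty$. The graph $G$ has row nodes $u_1,\dots,u_n$ and column nodes $v_1,\dots,v_n$; its edges are a blue edge $u_iv_i$ for every $i$, and a red edge $u_iv_j$ for every $i,j$ such that $q_i-M_{ij}$ is minimal among $q_k-M_{kj}$, $k\in[n]$ (these minima are finite). For $F\subset E$, $\alpha(F)=(w,z)\in\mathbb{T}^n\times\mathbb{T}^n$ where $w_i=q_i$ if the blue edge $u_iv_i$ is in $F$ and $w_i=-\infty$ otherwise, and $z_j=q_i-M_{ij}$ if some red edge $u_iv_j$ is in $F$ and $z_j=-\infty$ otherwise. $F$ covers a node if some edge of $F$ is incident to it. *)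

theory Defs
  imports "HOL-Analysis.Analysis" "HOL-Library.Extended_Real"
begin

text \<open>Tropical (max-plus) semiring T = R \<union> {-\<infinity>}, modelled inside ereal by the
  values different from +\<infinity>.  Rows/columns are indexed by a finite type 'n
  (so [n] is UNIV :: 'n set).  Subtraction on ereal satisfies a - (-\<infinity>) = +\<infinity>
  for finite a, as in the paper's convention.\<close>

definition trop :: "ereal \<Rightarrow> bool" where
  "trop x \<longleftrightarrow> x \<noteq> \<infinity>"

definition trop_mv :: "('n::finite \<Rightarrow> 'n \<Rightarrow> ereal) \<Rightarrow> ('n \<Rightarrow> ereal) \<Rightarrow> 'n \<Rightarrow> ereal" where
  "trop_mv M z i = (SUP j. M i j + z j)"

text \<open>Edges of the coloured bipartite multigraph: Blue i is u_i v_i, Red i j is u_i v_j.\<close>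
datatype 'n edge = Blue 'n | Red 'n 'n

definition is_red :: "('n::finite \<Rightarrow> 'n \<Rightarrow> ereal) \<Rightarrow> ('n \<Rightarrow> ereal) \<Rightarrow> 'n \<Rightarrow> 'n \<Rightarrow> bool" where
  "is_red M q i j \<longleftrightarrow> (\<forall>k. q i - M i j \<le> q k - M k j)"

definition edges :: "('n::finite \<Rightarrow> 'n \<Rightarrow> ereal) \<Rightarrow> ('n \<Rightarrow> ereal) \<Rightarrow> 'n edge set" where
  "edges M q = range Blue \<union> {Red i j | i j. is_red M q i j}"

definition covers_row :: "'n edge set \<Rightarrow> 'n \<Rightarrow> bool" where
  "covers_row F i \<longleftrightarrow> Blue i \<in> F \<or> (\<exists>j. Red i j \<in> F)"

definition alpha_w :: "('n::finite \<Rightarrow> ereal) \<Rightarrow> 'n edge set \<Rightarrow> 'n \<Rightarrow> ereal" where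
  "alpha_w q F i = (if Blue i \<in> F then q i else -\<infinity>)"

definition alpha_z :: "('n::finite \<Rightarrow> 'n \<Rightarrow> ereal) \<Rightarrow> ('n \<Rightarrow> ereal) \<Rightarrow> 'n edge set \<Rightarrow> 'n \<Rightarrow> ereal" where
  "alpha_z M q F j = (if \<exists>i. Red i j \<in> F
      then (let i = (SOME i. Red i j \<in> F) in q i - M i j) else -\<infinity>)"

end

theory Submission
  imports Defs
begin

text \<open>All red edges of column j attain the same minimum q_i - M_ij, so z_j is that minimum.
  Minimality gives M_kj + z_j \<le> q_k for every row k, hence w \<oplus> M \<odot> z \<le> q; and an edge of F
  at row i attains equality there: w_i = q_i for a blue edge, M_ij + z_j = q_i for a red one.
  A column that is not all -\<infinity> keeps the minimum, and hence z_j, below +\<infinity>; this matters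
  because ereal evaluates -\<infinity> + \<infinity> to 0.\<close>

lemma is_red_min_unique:
  assumes "is_red M q i j" and "is_red M q i' j"
  shows "q i - M i j = q i' - M i' j"
  using assms by (auto simp: is_red_def intro: antisym)

lemma is_red_if_Red_mem:
  assumes "F \<subseteq> edges M q" and "Red i j \<in> F"
  shows "is_red M q i j"
  using assms by (auto simp: edges_def)

lemma is_red_less_PInf:
  assumes "is_red M q i j" and "\<bar>M c j\<bar> \<noteq> \<infinity>" and "q c \<noteq> \<infinity>"
  shows "q i - M i j < \<infinity>"
proof -
  have "q i - M i j \<le> q c - M c j"
    using assms(1) by (simp add: is_red_def)
  also have "\<dots> < \<infinity>"
    using assms(2,3) by (cases "M c j"; cases "q c") auto
  finally show ?thesis .
qed

lemma alpha_z_Red: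
  assumes "F \<subseteq> edges M q" and "Red i j \<in> F"
  shows "alpha_z M q F j = q i - M i j"
proof -
  define i' where "i' = (SOME i. Red i j \<in> F)"
  have "Red i' j \<in> F"
    unfolding i'_def using assms(2) by (rule someI)
  then have "q i' - M i' j = q i - M i j"
    using assms by (blast intro: is_red_min_unique is_red_if_Red_mem)
  then show ?thesis
    using assms(2) by (auto simp: alpha_z_def simp flip: i'_def)
qed

lemma alpha_z_less_PInf:
  assumes "F \<subseteq> edges M q" and "\<bar>M c j\<bar> \<noteq> \<infinity>" and "q c \<noteq> \<infinity>"
  shows "alpha_z M q F j < \<infinity>"
proof (cases "\<exists>i. Red i j \<in> F")
  case True
  then obtain i where i: "Red i j \<in> F" ..
  show ?thesis
    unfolding alpha_z_Red[OF assms(1) i]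
    using is_red_less_PInf[OF is_red_if_Red_mem[OF assms(1) i] assms(2,3)] .
qed (simp add: alpha_z_def)

lemma M_plus_alpha_z_le:
  assumes "F \<subseteq> edges M q" and "M k j \<noteq> \<infinity>" and "alpha_z M q F j \<noteq> \<infinity>"
  shows "M k j + alpha_z M q F j \<le> q k"
proof (cases "M k j = -\<infinity>")
  case True
  then show ?thesis
    using assms(3) by (cases "alpha_z M q F j") auto
next
  case False
  with assms(2) have M_fin: "\<bar>M k j\<bar> \<noteq> \<infinity>"
    by auto
  show ?thesis
  proof (cases "\<exists>i. Red i j \<in> F")
    case True
    then obtain i where i: "Red i j \<in> F" ..
    have "q i - M i j \<le> q k - M k j"
      using is_red_if_Red_mem[OF assms(1) i] by (simp add: is_red_def)
    then show ?thesis
      using M_fin by (simp add: ereal_le_minus alpha_z_Red[OF assms(1) i] add.commute)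
  qed (use M_fin in \<open>auto simp: alpha_z_def\<close>)
qed

lemma trop_mv_alpha_z_le:
  assumes "F \<subseteq> edges M q" and "\<And>k j. M k j \<noteq> \<infinity>" and "\<And>j. alpha_z M q F j \<noteq> \<infinity>"
  shows "trop_mv M (alpha_z M q F) k \<le> q k"
  unfolding trop_mv_def by (rule SUP_least) (rule M_plus_alpha_z_le[OF assms])

lemma trop_mv_alpha_z_ge_Red:
  assumes "F \<subseteq> edges M q" and "Red i j \<in> F"
    and "M i j \<noteq> \<infinity>" and "q i \<noteq> -\<infinity>" and "alpha_z M q F j \<noteq> \<infinity>"
  shows "q i \<le> trop_mv M (alpha_z M q F) i"
proof -
  have "q i = M i j + alpha_z M q F j"
    using assms(3-5) by (cases "M i j"; cases "q i") (auto simp: alpha_z_Red[OF assms(1,2)])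
  also have "\<dots> \<le> trop_mv M (alpha_z M q F) i"
    unfolding trop_mv_def by (rule SUP_upper) simp
  finally show ?thesis .
qed

theorem lemma3p1:
  fixes M :: "'n::finite \<Rightarrow> 'n \<Rightarrow> ereal" and q :: "'n \<Rightarrow> ereal" and F :: "'n edge set"
  assumes M_trop: "\<forall>i j. trop (M i j)"
    and q_trop: "\<forall>i. trop (q i)"
    and cols: "\<forall>j. \<exists>i. M i j \<noteq> -\<infinity>"
    and q_fin: "\<forall>i. q i \<noteq> -\<infinity>"
    and FE: "F \<subseteq> edges M q"
    and cov: "\<forall>i. covers_row F i"
  shows "\<forall>i. sup (alpha_w q F i) (trop_mv M (alpha_z M q F) i) = q i"
proof
  fix i
  have M_ninf: "M k j \<noteq> \<infinity>" for k j
    using M_trop by (simp add: trop_def)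
  have z_ninf: "alpha_z M q F j \<noteq> \<infinity>" for j
  proof -
    obtain c where "M c j \<noteq> -\<infinity>"
      using cols by blast
    then show ?thesis
      using alpha_z_less_PInf[OF FE, of c j] M_ninf[of c j] q_trop by (auto simp: trop_def)
  qed
  have "sup (alpha_w q F i) (trop_mv M (alpha_z M q F) i) \<le> q i"
    using trop_mv_alpha_z_le[OF FE M_ninf z_ninf] by (simp add: alpha_w_def)
  moreover have "q i \<le> sup (alpha_w q F i) (trop_mv M (alpha_z M q F) i)"
  proof (cases "Blue i \<in> F")
    case True
    then show ?thesis by (simp add: alpha_w_def)
  next
    case False
    then obtain j where j: "Red i j \<in> F"
      using cov by (auto simp: covers_row_def)
    show ?thesis
      using trop_mv_alpha_z_ge_Red[OF FE j M_ninf] q_fin z_ninf by (blast intro: le_supI2)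
  qed
  ultimately show "sup (alpha_w q F i) (trop_mv M (alpha_z M q F) i) = q i"
    by (rule antisym)
qed

end
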